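(* Let $\lambda$ be a partition of $n$ and $\lambda'$ its conjugate. Let $B_\lambda\times 1\subseteq[n]\times[n]$ and $B_{\lambda'}\subseteq[n]\times[n]$ be the Ferrers boards defined in the context. Then the complement $([n]\times[n])\setminus(B_\lambda\times 1)$, rotated by $180^\circ$ (i.e. under the map $(i,j)\mapsto(n+1-i,\,n+1-j)$), equals $B_{\lambda'}$.
   Context: Partitions are drawn as diagrams in French convention (rows counted from bottom to top, row $j$ has $\lambda_j$ left-justified boxes); the box in column $i$ and row $j$ is $(i,j)$ and its content is $c(i,j)=i-j$. For a partition $\lambda$ of $n$, list the contents of its $n$ boxes in weakly decreasing order $c_1\ge c_2\ge\cdots\ge c_n$. The board $B_\lambda\subseteq[n]\times[n]$ (viewed as an $n\times n$ array of squares $(i,j)$, column $i$, row $j$) is the Ferrers board whose $i$-th column consists of the squares $(i,j)$ with $1\le j\le c_i+i-1$ (so column $i$ has height $c_i+i-1$). The board $B_\lambda\times 1$ is obtained by increasing the height of every column by one, i.e. its $i$-th column has height $c_i+i$. *)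

theory Defs
  imports Main
begin

text \<open>A partition of n: a weakly decreasing list of positive parts summing to n.
  Row j (1-based, French convention, bottom to top) has lam ! (j-1) boxes.\<close>
definition is_partition :: "nat \<Rightarrow> nat list \<Rightarrow> bool" where
  "is_partition n lam \<longleftrightarrow> sorted_wrt (\<ge>) lam \<and> 0 \<notin> set lam \<and> sum_list lam = n"

definition conj_part :: "nat list \<Rightarrow> nat list" where
  "conj_part lam = map (\<lambda>i. length (filter (\<lambda>x. i \<le> x) lam))
      [1..<Suc (if lam = [] then 0 else hd lam)]"

definition boxes :: "nat list \<Rightarrow> (nat \<times> nat) set" where
  "boxes lam = {(i, j). 1 \<le> j \<and> j \<le> length lam \<and> 1 \<le> i \<and> i \<le> lam ! (j - 1)}"

definition content :: "nat \<times> nat \<Rightarrow> int" where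
  "content b = int (fst b) - int (snd b)"

definition contents_desc :: "nat list \<Rightarrow> int list" where
  "contents_desc lam = rev (sort [content (i, j). j \<leftarrow> [1..<Suc (length lam)], i \<leftarrow> [1..<Suc (lam ! (j - 1))]])"

text \<open>c_i, 1-based.\<close>
definition cont :: "nat list \<Rightarrow> nat \<Rightarrow> int" where
  "cont lam i = contents_desc lam ! (i - 1)"

definition board :: "nat \<Rightarrow> nat list \<Rightarrow> (nat \<times> nat) set" where
  "board n lam = {(i, j). 1 \<le> i \<and> i \<le> n \<and> 1 \<le> j \<and> j \<le> n \<and>
       int j \<le> cont lam i + int i - 1}"

definition board_x1 :: "nat \<Rightarrow> nat list \<Rightarrow> (nat \<times> nat) set" where
  "board_x1 n lam = {(i, j). 1 \<le> i \<and> i \<le> n \<and> 1 \<le> j \<and> j \<le> n \<and>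
       int j \<le> cont lam i + int i}"

definition rot180 :: "nat \<Rightarrow> nat \<times> nat \<Rightarrow> nat \<times> nat" where
  "rot180 n p = (n + 1 - fst p, n + 1 - snd p)"

end

theory Submission
  imports Defs "HOL-Library.Multiset"
begin

text \<open>Transposing the diagram of \<open>\<lambda>\<close> gives the diagram of \<open>\<lambda>'\<close> and negates every content,
  so the decreasing content sequences satisfy \<open>c\<^sub>i(\<lambda>') = - c\<^bsub>n+1-i\<^esub>(\<lambda>)\<close>.
  The square \<open>(n+1-i, n+1-j)\<close> lies outside \<open>B\<^sub>\<lambda> \<times> 1\<close> iff
  \<open>n+1-j > c\<^bsub>n+1-i\<^esub>(\<lambda>) + n+1-i\<close>, i.e. iff \<open>j \<le> c\<^sub>i(\<lambda>') + i - 1\<close>,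
  which is the condition for \<open>(i, j) \<in> B\<^bsub>\<lambda>'\<^esub>\<close>.\<close>

lemma nth_less_length_filter_ge_iff:
  assumes "sorted_wrt (\<ge>) (xs :: nat list)"
  shows "k < length (filter (\<lambda>x. j \<le> x) xs) \<longleftrightarrow> k < length xs \<and> j \<le> xs ! k"
  using assms
proof (induction xs arbitrary: k)
  case (Cons x xs)
  show ?case
  proof (cases "j \<le> x")
    case True
    with Cons show ?thesis by (cases k) auto
  next
    case False
    with Cons.prems have "\<forall>y\<in>set xs. \<not> j \<le> y" by auto
    with False show ?thesis
      by (cases k) (auto simp: filter_empty_conv)
  qed
qed simp

lemma boxes_conj_part:
  assumes sorted: "sorted_wrt (\<ge>) lam"
  shows "boxes (conj_part lam) = prod.swap ` boxes lam"
proof -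
  have length_conj: "length (conj_part lam) = (if lam = [] then 0 else hd lam)"
    by (simp add: conj_part_def)
  have hd_ge: "lam ! k \<le> hd lam" if "k < length lam" for k
    using that sorted by (cases lam) (auto simp: nth_Cons split: nat.splits)
  have nth_conj: "conj_part lam ! k = length (filter (\<lambda>x. Suc k \<le> x) lam)"
    if "k < length (conj_part lam)" for k
    using that by (simp add: conj_part_def length_conj del: upt_Suc)
  have "(a, b) \<in> boxes (conj_part lam) \<longleftrightarrow> (b, a) \<in> boxes lam" for a b
  proof (cases "1 \<le> a \<and> 1 \<le> b")
    case True
    then have "(a, b) \<in> boxes (conj_part lam) \<longleftrightarrow>
        b \<le> length (conj_part lam) \<and> a - 1 < length (filter (\<lambda>x. b \<le> x) lam)"
      by (auto simp: boxes_def nth_conj)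
    also have "\<dots> \<longleftrightarrow> b \<le> length (conj_part lam) \<and> a \<le> length lam \<and> b \<le> lam ! (a - 1)"
      using nth_less_length_filter_ge_iff[OF sorted, of "a - 1" b] True by auto
    also have "\<dots> \<longleftrightarrow> (b, a) \<in> boxes lam"
      using True hd_ge[of "a - 1"] by (auto simp: boxes_def length_conj intro: le_trans)
    finally show ?thesis .
  qed (auto simp: boxes_def)
  then show ?thesis
    by force
qed

definition box_list :: "nat list \<Rightarrow> (nat \<times> nat) list" where
  "box_list lam = [(i, j). j \<leftarrow> [1..<Suc (length lam)], i \<leftarrow> [1..<Suc (lam ! (j - 1))]]"

lemma distinct_concat_map_pairs:
  "distinct js \<Longrightarrow> (\<And>j. distinct (f j)) \<Longrightarrow>
    distinct (concat (map (\<lambda>j. map (\<lambda>i. (i, j)) (f j)) js))"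
  by (induction js) (auto simp: distinct_map inj_on_def)

lemma mset_box_list: "mset (box_list lam) = mset_set (boxes lam)"
proof -
  have "distinct (box_list lam)"
    unfolding box_list_def by (rule distinct_concat_map_pairs) simp_all
  moreover have "set (box_list lam) = boxes lam"
    by (force simp: box_list_def boxes_def Suc_le_eq)
  ultimately show ?thesis
    by (metis mset_set_set)
qed

lemma length_box_list: "length (box_list lam) = sum_list lam"
proof -
  have "[1..<Suc (length lam)] = map Suc [0..<length lam]"
    by (simp add: map_Suc_upt)
  then show ?thesis
    by (simp add: box_list_def length_concat comp_def map_nth del: upt_Suc)
qed

lemma contents_desc_box_list: "contents_desc lam = rev (sort (map content (box_list lam)))"
  by (simp add: contents_desc_def box_list_def map_concat comp_def)

lemma contents_desc_eq_boxes:
  "contents_desc lam = rev (sorted_list_of_multiset (image_mset content (mset_set (boxes lam))))"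
  by (simp add: contents_desc_box_list flip: mset_box_list sorted_list_of_multiset_mset)

lemma length_contents_desc: "length (contents_desc lam) = sum_list lam"
  by (simp add: contents_desc_box_list length_box_list)

lemma sorted_list_of_multiset_image_uminus:
  fixes M :: "'a :: linordered_ab_group_add multiset"
  shows "sorted_list_of_multiset (image_mset uminus M) =
    map uminus (rev (sorted_list_of_multiset M))"
proof -
  obtain xs where "mset xs = M"
    using ex_mset by blast
  moreover have "sort (map uminus xs) = map uminus (rev (sort xs))"
    by (rule properties_for_sort) (simp_all add: sorted_map sorted_wrt_rev)
  ultimately show ?thesis
    by (metis mset_map sorted_list_of_multiset_mset)
qed

lemma contents_desc_conj_part:
  assumes "sorted_wrt (\<ge>) lam"
  shows "contents_desc (conj_part lam) = map uminus (rev (contents_desc lam))"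
proof -
  have "image_mset content (mset_set (boxes (conj_part lam))) =
      image_mset (content \<circ> prod.swap) (mset_set (boxes lam))"
    by (simp add: boxes_conj_part[OF assms] image_mset_mset_set flip: image_mset.comp)
  also have "\<dots> = image_mset uminus (image_mset content (mset_set (boxes lam)))"
    by (simp add: multiset.map_comp comp_def content_def case_prod_unfold)
  finally show ?thesis
    by (simp add: contents_desc_eq_boxes sorted_list_of_multiset_image_uminus rev_map)
qed

lemma cont_conj_part:
  assumes "is_partition n lam" and "1 \<le> i" and "i \<le> n"
  shows "cont (conj_part lam) i = - cont lam (n + 1 - i)"
  using assms length_contents_desc[of lam]
  by (simp add: is_partition_def cont_def contents_desc_conj_part rev_nth)

lemma rot180_image_square_diff:
  "rot180 n ` ({1..n} \<times> {1..n} - B) = {p \<in> {1..n} \<times> {1..n}. rot180 n p \<notin> B}"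
  (is "_ = ?R")
proof (intro set_eqI iffI)
  have involution: "rot180 n (rot180 n p) = p" if "p \<in> {1..n} \<times> {1..n}" for p
    using that by (auto simp: rot180_def)
  have maps_to: "rot180 n p \<in> {1..n} \<times> {1..n}" if "p \<in> {1..n} \<times> {1..n}" for p
    using that by (auto simp: rot180_def)
  show "p \<in> ?R" if "p \<in> rot180 n ` ({1..n} \<times> {1..n} - B)" for p
    using that involution maps_to by auto
  show "p \<in> rot180 n ` ({1..n} \<times> {1..n} - B)" if "p \<in> ?R" for p
    using that involution[of p] maps_to[of p] by (intro rev_image_eqI[of "rot180 n p"]) auto
qed

theorem mainTheorem1:
  fixes n :: nat and lam :: "nat list"
  assumes "is_partition n lam"
  shows "rot180 n ` (({1..n} \<times> {1..n}) - board_x1 n lam) = board n (conj_part lam)"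
proof -
  have "rot180 n (a, b) \<notin> board_x1 n lam \<longleftrightarrow> (a, b) \<in> board n (conj_part lam)"
    if "(a, b) \<in> {1..n} \<times> {1..n}" for a b
    using that cont_conj_part[OF assms, of a]
    by (auto simp: rot180_def board_x1_def board_def)
  then show ?thesis
    unfolding rot180_image_square_diff by (auto simp: board_def)
qed

end
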